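(* In the MDPUC setting of the context, assume Ergodicity, and let $\beta(z)=\mathbb E[\pi_e(A\mid S,U)/\pi_b(A\mid S,U)\mid Z=z]$. Then the stationary density ratio $d(S)$ is the unique function satisfying the moment condition $\mathbb E[d(S)]=1$ together with the conditional moment restriction $d(S')=\mathbb E_b[d(S)\beta(Z)\mid S']$ for all $S'$.
   Context: MDPUC: finite state space $\mathcal S$, actions $[m]$, confounder space $\mathcal U$, transitions $P_T(s'\mid s,a,u)$; at each time step an iid confounder $U_t$ is drawn, $A_t\sim\pi(\cdot\mid S_t,U_t)$, $S_{t+1}\sim P_T(\cdot\mid S_t,A_t,U_t)$. $S'$ is the successor state of $S$, $Z=(S,A,S')$, $X=(Z,U)$. Behavior policy $\pi_b(a\mid s,u)$, evaluation policy $\pi_e(a\mid s,u)$. Ergodicity: the chain of $X$ values under each of $\pi_b,\pi_e$ is ergodic, and under $\pi_b$ it is stationary. $\mathbb E_b$ (and unsubscripted $\mathbb E$) is expectation under the stationary distribution of $\pi_b$; $d(S)$ is the stationary density ratio of $S$: $\mathbb E_e[g(S)]=\mathbb E_b[d(S)g(S)]$ for all measurable $g$.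
   Formalization: Every action with $\pi_e(a\mid s,u)>0$ also has $\pi_b(a\mid s,u)>0$, and uniqueness of $d(S)$ is only up to its values on states of zero stationary probability under $\pi_b$. Apart from conventions, each condition added here is assumed in the paper as well or is needed for the statement above to hold. *)

theory Defs
  imports "HOL-Probability.Probability"
begin

text \<open>MDPUC with finite state type 's, actions {0..<m} (i.e. [m]), confounders of type 'u
  distributed iid according to the probability measure M.
  Policies: pol s u a = pi(a | s,u).  Transitions: PT s a u s' = P_T(s' | s,a,u).\<close>

definition is_policy :: "nat \<Rightarrow> 'u measure \<Rightarrow> ('s \<Rightarrow> 'u \<Rightarrow> nat \<Rightarrow> real) \<Rightarrow> bool" where
  "is_policy m M pol \<longleftrightarrow>
     (\<forall>s a. (\<lambda>u. pol s u a) \<in> borel_measurable M) \<and>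
     (\<forall>s. \<forall>u\<in>space M. (\<forall>a<m. 0 \<le> pol s u a) \<and> (\<Sum>a<m. pol s u a) = 1)"

definition is_transition :: "nat \<Rightarrow> 'u measure \<Rightarrow> ('s::finite \<Rightarrow> nat \<Rightarrow> 'u \<Rightarrow> 's \<Rightarrow> real) \<Rightarrow> bool" where
  "is_transition m M PT \<longleftrightarrow>
     (\<forall>s a s'. (\<lambda>u. PT s a u s') \<in> borel_measurable M) \<and>
     (\<forall>s. \<forall>a<m. \<forall>u\<in>space M. (\<forall>s'. 0 \<le> PT s a u s') \<and> (\<Sum>s'\<in>UNIV. PT s a u s') = 1)"

definition Kern :: "nat \<Rightarrow> 'u measure \<Rightarrow> ('s \<Rightarrow> 'u \<Rightarrow> nat \<Rightarrow> real)
    \<Rightarrow> ('s \<Rightarrow> nat \<Rightarrow> 'u \<Rightarrow> 's \<Rightarrow> real) \<Rightarrow> 's \<Rightarrow> 's \<Rightarrow> real" where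
  "Kern m M pol PT s s' = (\<integral>u. (\<Sum>a<m. pol s u a * PT s a u s') \<partial>M)"

fun nstep :: "('s::finite \<Rightarrow> 's \<Rightarrow> real) \<Rightarrow> nat \<Rightarrow> 's \<Rightarrow> 's \<Rightarrow> real" where
  "nstep K 0 s s' = (if s = s' then 1 else 0)"
| "nstep K (Suc n) s s' = (\<Sum>s''\<in>UNIV. nstep K n s s'' * K s'' s')"

definition stationary_dist :: "('s::finite \<Rightarrow> 's \<Rightarrow> real) \<Rightarrow> ('s \<Rightarrow> real) \<Rightarrow> bool" where
  "stationary_dist K \<rho> \<longleftrightarrow> (\<forall>s. 0 \<le> \<rho> s) \<and> (\<Sum>s\<in>UNIV. \<rho> s) = 1 \<and>
     (\<forall>s'. \<rho> s' = (\<Sum>s\<in>UNIV. \<rho> s * K s s'))"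

text \<open>Since X_t = (S_t,A_t,S_{t+1},U_t) depends on
  the past only through S_t, this is ergodicity of the X-chain.\<close>
definition ergodic_chain :: "('s::finite \<Rightarrow> 's \<Rightarrow> real) \<Rightarrow> bool" where
  "ergodic_chain K \<longleftrightarrow> (\<exists>\<rho>. stationary_dist K \<rho> \<and>
     (\<forall>s s'. (\<lambda>n. nstep K n s s') \<longlonglongrightarrow> \<rho> s'))"

text \<open>Expectation of h(Z,U) under the stationary law of X = (S,A,S',U) for behaviour policy pib,
  where rho is the stationary law of S.\<close>
definition Eb :: "nat \<Rightarrow> 'u measure \<Rightarrow> ('s::finite \<Rightarrow> real) \<Rightarrow> ('s \<Rightarrow> 'u \<Rightarrow> nat \<Rightarrow> real)
    \<Rightarrow> ('s \<Rightarrow> nat \<Rightarrow> 'u \<Rightarrow> 's \<Rightarrow> real) \<Rightarrow> ('s \<times> nat \<times> 's \<Rightarrow> 'u \<Rightarrow> real) \<Rightarrow> real" where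
  "Eb m M \<rho> pib PT h = (\<Sum>s\<in>UNIV. \<rho> s *
      (\<integral>u. (\<Sum>a<m. \<Sum>s'\<in>UNIV. pib s u a * PT s a u s' * h (s, a, s') u) \<partial>M))"

definition beta :: "nat \<Rightarrow> 'u measure \<Rightarrow> ('s::finite \<Rightarrow> real) \<Rightarrow> ('s \<Rightarrow> 'u \<Rightarrow> nat \<Rightarrow> real)
    \<Rightarrow> ('s \<Rightarrow> 'u \<Rightarrow> nat \<Rightarrow> real) \<Rightarrow> ('s \<Rightarrow> nat \<Rightarrow> 'u \<Rightarrow> 's \<Rightarrow> real) \<Rightarrow> 's \<times> nat \<times> 's \<Rightarrow> real" where
  "beta m M \<rho> pib pie PT z =
     Eb m M \<rho> pib PT (\<lambda>(s, a, s') u. (if (s, a, s') = z then 1 else 0) * (pie s u a / pib s u a))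
     / Eb m M \<rho> pib PT (\<lambda>z' u. if z' = z then 1 else 0)"

definition moment_conditions :: "nat \<Rightarrow> 'u measure \<Rightarrow> ('s::finite \<Rightarrow> real) \<Rightarrow> ('s \<Rightarrow> 'u \<Rightarrow> nat \<Rightarrow> real)
    \<Rightarrow> ('s \<Rightarrow> 'u \<Rightarrow> nat \<Rightarrow> real) \<Rightarrow> ('s \<Rightarrow> nat \<Rightarrow> 'u \<Rightarrow> 's \<Rightarrow> real) \<Rightarrow> ('s \<Rightarrow> real) \<Rightarrow> bool" where
  "moment_conditions m M \<rho> pib pie PT f \<longleftrightarrow>
     Eb m M \<rho> pib PT (\<lambda>(s, a, s') u. f s) = 1 \<and>
     (\<forall>t. Eb m M \<rho> pib PT (\<lambda>(s, a, s') u. if s' = t then 1 else 0) > 0 \<longrightarrow>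
        f t = Eb m M \<rho> pib PT (\<lambda>(s, a, s') u. f s * beta m M \<rho> pib pie PT (s, a, s') * (if s' = t then 1 else 0))
              / Eb m M \<rho> pib PT (\<lambda>(s, a, s') u. if s' = t then 1 else 0))"

end

(* Conditioning on Z = (s, a, s') integrates out the confounder: if q(s,a,s') and r(s,a,s') are
   the probabilities of (A, S') = (a, s') given S = s under pib and pie, then beta = r / q, and
   E_b[f(S) beta(Z) 1{S' = t}] = sum_s rhob(s) f(s) K_e(s, t) with K_e the state kernel of pie.
   So the moment conditions say that g = rhob * f is a probability vector that is invariant under
   K_e at every t in the support of rhob; off that support both sides vanish, since rhob-stationarity
   forbids transitions into null states and overlap transfers this from K_b to K_e.  An ergodic
   chain has only one invariant probability vector, so g = rhoe = rhob * d. *)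

theory Submission
  imports Defs
begin

lemma is_policy_bounds:
  assumes "is_policy m M pol" "u \<in> space M" "a < m"
  shows "0 \<le> pol s u a" "pol s u a \<le> 1"
proof -
  have pol: "\<forall>a<m. 0 \<le> pol s u a" "(\<Sum>a<m. pol s u a) = 1"
    using assms unfolding is_policy_def by auto
  then show "0 \<le> pol s u a" using assms(3) by auto
  have "pol s u a \<le> (\<Sum>a<m. pol s u a)"
    by (rule member_le_sum) (use pol assms(3) in auto)
  then show "pol s u a \<le> 1" using pol by simp
qed

lemma is_transition_bounds:
  assumes "is_transition m M PT" "u \<in> space M" "a < m"
  shows "0 \<le> PT s a u t" "PT s a u t \<le> 1"
proof -
  have PT: "\<forall>t. 0 \<le> PT s a u t" "(\<Sum>t\<in>UNIV. PT s a u t) = 1"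
    using assms unfolding is_transition_def by auto
  then show "0 \<le> PT s a u t" by auto
  have "PT s a u t \<le> (\<Sum>t\<in>UNIV. PT s a u t)"
    by (rule member_le_sum) (use PT in auto)
  then show "PT s a u t \<le> 1" using PT by simp
qed

lemma sum_point_mass:
  fixes x :: "'a \<Rightarrow> 'b \<Rightarrow> 'c \<Rightarrow> 'd::comm_monoid_add"
  assumes "finite A" "finite B" "finite C" "z \<in> A \<times> B \<times> C"
  shows "(\<Sum>s\<in>A. \<Sum>a\<in>B. \<Sum>t\<in>C. if (s, a, t) = z then x s a t else 0) = (case z of (s, a, t) \<Rightarrow> x s a t)"
proof -
  have "(\<Sum>s\<in>A. \<Sum>a\<in>B. \<Sum>t\<in>C. if (s, a, t) = z then x s a t else 0) =
      (\<Sum>(s, a, t)\<in>A \<times> B \<times> C. if (s, a, t) = z then x s a t else 0)"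
    by (simp add: sum.cartesian_product)
  also have "\<dots> = (\<Sum>y\<in>A \<times> B \<times> C. if y = z then (case y of (s, a, t) \<Rightarrow> x s a t) else 0)"
    by (intro sum.cong) auto
  finally show ?thesis using assms by (simp add: sum.delta')
qed

definition action_successor_prob :: "'u measure \<Rightarrow> ('s \<Rightarrow> 'u \<Rightarrow> nat \<Rightarrow> real)
    \<Rightarrow> ('s \<Rightarrow> nat \<Rightarrow> 'u \<Rightarrow> 's \<Rightarrow> real) \<Rightarrow> 's \<Rightarrow> nat \<Rightarrow> 's \<Rightarrow> real" where
  "action_successor_prob M pol PT s a t = (\<integral>u. pol s u a * PT s a u t \<partial>M)"

context
  fixes m :: nat and M :: "'u measure" and pol :: "'s::finite \<Rightarrow> 'u \<Rightarrow> nat \<Rightarrow> real"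
    and PT :: "'s::finite \<Rightarrow> nat \<Rightarrow> 'u \<Rightarrow> 's \<Rightarrow> real"
  assumes prob: "prob_space M" and policy: "is_policy m M pol"
    and transition: "is_transition m M PT"
begin

lemma integrable_policy_transition:
  assumes "a < m"
  shows "integrable M (\<lambda>u. pol s u a * PT s a u t)"
proof -
  interpret prob_space M by (rule prob)
  show ?thesis
  proof (rule integrable_const_bound[where B = 1])
    show "AE u in M. norm (pol s u a * PT s a u t) \<le> 1"
    proof (rule AE_I2)
      fix u assume "u \<in> space M"
      note is_policy_bounds[OF policy this assms, of s] is_transition_bounds[OF transition this assms, of s t]
      then show "norm (pol s u a * PT s a u t) \<le> 1"
        by (simp add: abs_mult mult_le_one)
    qed
    show "(\<lambda>u. pol s u a * PT s a u t) \<in> borel_measurable M"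
      using policy transition unfolding is_policy_def is_transition_def
      by (intro borel_measurable_times) auto
  qed
qed

lemma action_successor_prob_nonneg: "a < m \<Longrightarrow> 0 \<le> action_successor_prob M pol PT s a t"
  unfolding action_successor_prob_def
  by (rule Bochner_Integration.integral_nonneg) (simp add: is_policy_bounds[OF policy] is_transition_bounds[OF transition])

lemma Kern_eq_sum_action_successor_prob:
  "Kern m M pol PT s t = (\<Sum>a<m. action_successor_prob M pol PT s a t)"
  unfolding Kern_def action_successor_prob_def
  by (rule Bochner_Integration.integral_sum) (simp add: integrable_policy_transition)

lemma Kern_nonneg: "0 \<le> Kern m M pol PT s t"
  unfolding Kern_eq_sum_action_successor_prob by (intro sum_nonneg action_successor_prob_nonneg) simp

lemma Eb_eq_sum_integral:
  assumes "\<And>s a t. a < m \<Longrightarrow> integrable M (\<lambda>u. pol s u a * PT s a u t * h (s, a, t) u)"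
  shows "Eb m M \<rho> pol PT h =
    (\<Sum>s\<in>UNIV. \<Sum>a<m. \<Sum>t\<in>UNIV. \<rho> s * (\<integral>u. pol s u a * PT s a u t * h (s, a, t) u \<partial>M))"
  unfolding Eb_def
  by (simp add: assms Bochner_Integration.integral_sum Bochner_Integration.integrable_sum sum_distrib_left)

lemma Eb_eq_sum_action_successor_prob:
  assumes "\<And>s a t u. h (s, a, t) u = c s a t"
  shows "Eb m M \<rho> pol PT h =
    (\<Sum>s\<in>UNIV. \<Sum>a<m. \<Sum>t\<in>UNIV. \<rho> s * action_successor_prob M pol PT s a t * c s a t)"
proof -
  have "integrable M (\<lambda>u. pol s u a * PT s a u t * h (s, a, t) u)" if "a < m" for s a t
    using integrable_policy_transition[OF that] by (simp add: assms)
  then show ?thesis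
    by (simp add: Eb_eq_sum_integral assms action_successor_prob_def mult.assoc[symmetric])
qed

lemma Eb_point_indicator:
  assumes "a < m"
  shows "Eb m M \<rho> pol PT (\<lambda>z u. if z = (s, a, t) then 1 else 0) =
    \<rho> s * action_successor_prob M pol PT s a t"
proof -
  have "Eb m M \<rho> pol PT (\<lambda>z u. if z = (s, a, t) then 1 else 0) =
      (\<Sum>s'\<in>UNIV. \<Sum>a'<m. \<Sum>t'\<in>UNIV.
        if (s', a', t') = (s, a, t) then \<rho> s * action_successor_prob M pol PT s a t else 0)"
    by (subst Eb_eq_sum_action_successor_prob[where c = "\<lambda>s' a' t'. if (s', a', t') = (s, a, t) then 1 else 0"])
      (auto intro!: sum.cong)
  also have "\<dots> = \<rho> s * action_successor_prob M pol PT s a t"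
    using sum_point_mass[of UNIV "{..<m}" UNIV "(s, a, t)"] assms by simp
  finally show ?thesis .
qed

lemma sum_action_successor_prob: "(\<Sum>a<m. \<Sum>t\<in>UNIV. action_successor_prob M pol PT s a t) = 1"
proof -
  have "(\<Sum>a<m. \<Sum>t\<in>UNIV. action_successor_prob M pol PT s a t) =
      (\<integral>u. (\<Sum>a<m. pol s u a * (\<Sum>t\<in>UNIV. PT s a u t)) \<partial>M)"
    unfolding action_successor_prob_def
    by (simp add: integrable_policy_transition Bochner_Integration.integral_sum
        Bochner_Integration.integrable_sum sum_distrib_left)
  also have "\<dots> = (\<integral>u. 1 \<partial>M)"
    using policy transition unfolding is_policy_def is_transition_def
    by (intro Bochner_Integration.integral_cong) auto
  finally show ?thesis by (simp add: prob_space.prob_space[OF prob])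
qed

end

lemma stationary_distD:
  assumes "stationary_dist K \<rho>"
  shows "0 \<le> \<rho> s" "(\<Sum>s\<in>UNIV. \<rho> s) = 1" "(\<Sum>s\<in>UNIV. \<rho> s * K s t) = \<rho> t"
  using assms unfolding stationary_dist_def by (blast, blast, metis)

lemma nstep_invariant:
  fixes K :: "'s::finite \<Rightarrow> 's \<Rightarrow> real"
  assumes "\<forall>t. g t = (\<Sum>s\<in>UNIV. g s * K s t)"
  shows "(\<Sum>s\<in>UNIV. g s * nstep K n s t) = g t"
proof (induction n arbitrary: t)
  case 0
  then show ?case by (simp add: if_distrib cong: if_cong)
next
  case (Suc n)
  have "(\<Sum>s\<in>UNIV. g s * nstep K (Suc n) s t) = (\<Sum>s\<in>UNIV. \<Sum>s'\<in>UNIV. g s * nstep K n s s' * K s' t)"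
    by (simp add: sum_distrib_left mult.assoc)
  also have "\<dots> = (\<Sum>s'\<in>UNIV. (\<Sum>s\<in>UNIV. g s * nstep K n s s') * K s' t)"
    by (subst sum.swap) (simp add: sum_distrib_right)
  also have "\<dots> = (\<Sum>s'\<in>UNIV. g s' * K s' t)"
    by (simp only: Suc.IH)
  also have "\<dots> = g t"
    by (rule assms[rule_format, symmetric])
  finally show ?case .
qed

lemma ergodic_chain_invariant_unique:
  fixes K :: "'s::finite \<Rightarrow> 's \<Rightarrow> real"
  assumes "ergodic_chain K" "stationary_dist K \<rho>"
    and "(\<Sum>s\<in>UNIV. g s) = 1" "\<forall>t. g t = (\<Sum>s\<in>UNIV. g s * K s t)"
  shows "g = \<rho>"
proof -
  obtain \<rho>' where lim: "\<And>s t. (\<lambda>n. nstep K n s t) \<longlonglongrightarrow> \<rho>' t"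
    using assms(1) unfolding ergodic_chain_def by auto
  have limit: "h t = \<rho>' t" if "(\<Sum>s\<in>UNIV. h s) = 1" "\<forall>t. h t = (\<Sum>s\<in>UNIV. h s * K s t)" for h t
  proof -
    have "(\<lambda>n. \<Sum>s\<in>UNIV. h s * nstep K n s t) \<longlonglongrightarrow> (\<Sum>s\<in>UNIV. h s * \<rho>' t)"
      using lim by (intro tendsto_sum tendsto_mult_left)
    then have "(\<lambda>n. h t) \<longlonglongrightarrow> (\<Sum>s\<in>UNIV. h s) * \<rho>' t"
      unfolding nstep_invariant[OF that(2)] sum_distrib_right[symmetric] .
    then show ?thesis
      using that(1) LIMSEQ_unique[OF tendsto_const] by simp
  qed
  have "\<rho> t = \<rho>' t" for t
    by (rule limit) (simp_all add: stationary_distD[OF assms(2)])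
  then have "g t = \<rho> t" for t
    using limit[OF assms(3,4)] by simp
  then show ?thesis ..
qed

lemma stationary_dist_transition_into_null:
  fixes K :: "'s::finite \<Rightarrow> 's \<Rightarrow> real"
  assumes "stationary_dist K \<rho>" "\<And>s. 0 \<le> K s t" "\<rho> t = 0"
  shows "\<rho> s * K s t = 0"
proof -
  have "(\<Sum>s\<in>UNIV. \<rho> s * K s t) = 0"
    using stationary_distD(3)[OF assms(1)] assms(3) by simp
  then show ?thesis
    using assms(2) stationary_distD(1)[OF assms(1)] by (subst (asm) sum_nonneg_eq_0_iff) auto
qed

(* Covers the junk value beta = 0/0 = 0 on transitions that have probability zero under pib. *)
lemma mult_ratio_cancel:
  fixes \<rho> q r :: "'a::field"
  assumes "q = 0 \<Longrightarrow> r = 0"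
  shows "\<rho> * q * (\<rho> * r / (\<rho> * q)) = \<rho> * r"
  using assms by (cases "\<rho> * q = 0") auto

locale mdpuc_overlap =
  fixes m :: nat and M :: "'u measure" and PT :: "'s::finite \<Rightarrow> nat \<Rightarrow> 'u \<Rightarrow> 's \<Rightarrow> real"
    and pib pie :: "'s \<Rightarrow> 'u \<Rightarrow> nat \<Rightarrow> real" and rhob :: "'s \<Rightarrow> real"
  assumes prob: "prob_space M"
    and policy_b: "is_policy m M pib" and policy_e: "is_policy m M pie"
    and transition: "is_transition m M PT"
    and overlap: "\<forall>s. \<forall>u\<in>space M. \<forall>a<m. 0 < pie s u a \<longrightarrow> 0 < pib s u a"
    and stationary_b: "stationary_dist (Kern m M pib PT) rhob"
begin

lemmas integrable_b = integrable_policy_transition[OF prob policy_b transition]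
  and integrable_e = integrable_policy_transition[OF prob policy_e transition]
  and Kern_b = Kern_eq_sum_action_successor_prob[OF prob policy_b transition]
  and Kern_e = Kern_eq_sum_action_successor_prob[OF prob policy_e transition]
  and Eb_b = Eb_eq_sum_action_successor_prob[OF prob policy_b transition]

lemma importance_weight:
  assumes "a < m" "u \<in> space M"
  shows "pib s u a * PT s a u t * (pie s u a / pib s u a) = pie s u a * PT s a u t"
proof (cases "pib s u a = 0")
  case True
  have "0 \<le> pie s u a" "\<not> 0 < pie s u a"
    using is_policy_bounds(1)[OF policy_e assms(2,1)] overlap assms True by force+
  then show ?thesis using True by simp
qed simp

lemma action_successor_prob_absolutely_continuous:
  assumes "a < m" "action_successor_prob M pib PT s a t = 0"
  shows "action_successor_prob M pie PT s a t = 0"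
proof -
  have "AE u in M. pib s u a * PT s a u t = 0"
    using assms(2) unfolding action_successor_prob_def
    by (subst (asm) integral_nonneg_eq_0_iff_AE)
      (auto simp: integrable_b assms(1) is_policy_bounds[OF policy_b] is_transition_bounds[OF transition])
  then have "AE u in M. pie s u a * PT s a u t = 0"
  proof (rule AE_mp[OF _ AE_I2], intro impI)
    fix u assume "u \<in> space M" "pib s u a * PT s a u t = 0"
    then show "pie s u a * PT s a u t = 0"
      using importance_weight[OF assms(1), of u s t] by (metis mult_zero_left)
  qed
  then show ?thesis
    unfolding action_successor_prob_def by (rule integral_eq_zero_AE)
qed

lemma Kern_absolutely_continuous:
  assumes "Kern m M pib PT s t = 0"
  shows "Kern m M pie PT s t = 0"
proof -
  have "\<forall>a\<in>{..<m}. action_successor_prob M pib PT s a t = 0"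
    using assms unfolding Kern_b
    by (subst (asm) sum_nonneg_eq_0_iff) (auto simp: action_successor_prob_nonneg[OF prob policy_b transition])
  then show ?thesis
    unfolding Kern_e by (simp add: action_successor_prob_absolutely_continuous)
qed

lemma Eb_importance_weight_indicator:
  assumes "a < m"
  shows "Eb m M \<rho> pib PT
      (\<lambda>(s', a', t') u. (if (s', a', t') = (s, a, t) then 1 else 0) * (pie s' u a' / pib s' u a')) =
    \<rho> s * action_successor_prob M pie PT s a t"
proof -
  let ?\<delta> = "\<lambda>s' a' t'. if (s', a', t') = (s, a, t) then 1 else 0 :: real"
  have weighted: "pib s' u a' * PT s' a' u t' * (?\<delta> s' a' t' * (pie s' u a' / pib s' u a')) =
      ?\<delta> s' a' t' * (pie s' u a' * PT s' a' u t')" if "a' < m" "u \<in> space M" for s' a' t' u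
  proof -
    have "pib s' u a' * PT s' a' u t' * (?\<delta> s' a' t' * (pie s' u a' / pib s' u a')) =
        ?\<delta> s' a' t' * (pib s' u a' * PT s' a' u t' * (pie s' u a' / pib s' u a'))"
      by (simp only: mult_ac)
    then show ?thesis
      by (simp only: importance_weight[OF that])
  qed
  have integral_weighted: "(\<integral>u. pib s' u a' * PT s' a' u t' * (?\<delta> s' a' t' * (pie s' u a' / pib s' u a')) \<partial>M) =
      ?\<delta> s' a' t' * action_successor_prob M pie PT s' a' t'" if "a' < m" for s' a' t'
    unfolding action_successor_prob_def
    by (simp only: Bochner_Integration.integral_cong[OF refl weighted[OF that]] integral_mult_right_zero)
  have integrable_weighted:
    "integrable M (\<lambda>u. pib s' u a' * PT s' a' u t' * (?\<delta> s' a' t' * (pie s' u a' / pib s' u a')))"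
    if "a' < m" for s' a' t'
    using integrable_e[OF that]
    by (simp only: Bochner_Integration.integrable_cong[OF refl weighted[OF that]] integrable_mult_right)
  have "Eb m M \<rho> pib PT (\<lambda>(s', a', t') u. ?\<delta> s' a' t' * (pie s' u a' / pib s' u a')) =
      (\<Sum>s'\<in>UNIV. \<Sum>a'<m. \<Sum>t'\<in>UNIV.
        \<rho> s' * (\<integral>u. pib s' u a' * PT s' a' u t' * (?\<delta> s' a' t' * (pie s' u a' / pib s' u a')) \<partial>M))"
    by (subst Eb_eq_sum_integral[OF prob policy_b transition]) (simp_all only: prod.case integrable_weighted)
  also have "\<dots> = (\<Sum>s'\<in>UNIV. \<Sum>a'<m. \<Sum>t'\<in>UNIV.
      if (s', a', t') = (s, a, t) then \<rho> s * action_successor_prob M pie PT s a t else 0)"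
    by (intro sum.cong refl) (simp only: lessThan_iff integral_weighted, simp)
  also have "\<dots> = \<rho> s * action_successor_prob M pie PT s a t"
    using sum_point_mass[of UNIV "{..<m}" UNIV "(s, a, t)"] assms by simp
  finally show ?thesis .
qed

lemma beta_eq:
  assumes "a < m"
  shows "beta m M \<rho> pib pie PT (s, a, t) =
    \<rho> s * action_successor_prob M pie PT s a t / (\<rho> s * action_successor_prob M pib PT s a t)"
  unfolding beta_def Eb_importance_weight_indicator[OF assms]
    Eb_point_indicator[OF prob policy_b transition assms] ..

lemma Eb_state:
  "Eb m M \<rho> pib PT (\<lambda>(s, a, s') u. f s) = (\<Sum>s\<in>UNIV. \<rho> s * f s)"
proof -
  have "Eb m M \<rho> pib PT (\<lambda>(s, a, s') u. f s) =
      (\<Sum>s\<in>UNIV. \<rho> s * f s * (\<Sum>a<m. \<Sum>t\<in>UNIV. action_successor_prob M pib PT s a t))"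
    by (simp add: Eb_b sum_distrib_left ac_simps)
  then show ?thesis
    by (simp add: sum_action_successor_prob[OF prob policy_b transition])
qed

lemma Eb_successor_indicator:
  "Eb m M rhob pib PT (\<lambda>(s, a, s') u. if s' = t then 1 else 0) = rhob t"
proof -
  have "Eb m M rhob pib PT (\<lambda>(s, a, s') u. if s' = t then 1 else 0) =
      (\<Sum>s\<in>UNIV. rhob s * Kern m M pib PT s t)"
    by (simp add: Eb_b[where c = "\<lambda>s a s'. if s' = t then 1 else 0"] Kern_b sum_distrib_left
        if_distrib cong: if_cong)
  also have "\<dots> = rhob t"
    using stationary_distD(3)[OF stationary_b] .
  finally show ?thesis .
qed

lemma Eb_beta_successor_indicator:
  "Eb m M \<rho> pib PT (\<lambda>(s, a, s') u. f s * beta m M \<rho> pib pie PT (s, a, s') * (if s' = t then 1 else 0)) =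
    (\<Sum>s\<in>UNIV. \<rho> s * f s * Kern m M pie PT s t)"
proof -
  have "Eb m M \<rho> pib PT (\<lambda>(s, a, s') u. f s * beta m M \<rho> pib pie PT (s, a, s') * (if s' = t then 1 else 0)) =
      (\<Sum>s\<in>UNIV. \<Sum>a<m. f s * (\<rho> s * action_successor_prob M pib PT s a t * beta m M \<rho> pib pie PT (s, a, t)))"
    by (simp add: Eb_b[where c = "\<lambda>s a s'. f s * beta m M \<rho> pib pie PT (s, a, s') * (if s' = t then 1 else 0)"]
        if_distrib ac_simps cong: if_cong)
  also have "\<dots> = (\<Sum>s\<in>UNIV. \<Sum>a<m. f s * (\<rho> s * action_successor_prob M pie PT s a t))"
    by (intro sum.cong refl)
      (simp add: beta_eq mult_ratio_cancel action_successor_prob_absolutely_continuous)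
  finally show ?thesis
    by (simp add: Kern_e sum_distrib_left ac_simps)
qed

lemma moment_conditions_iff:
  "moment_conditions m M rhob pib pie PT f \<longleftrightarrow>
    (\<Sum>s\<in>UNIV. rhob s * f s) = 1 \<and>
    (\<forall>t. 0 < rhob t \<longrightarrow> rhob t * f t = (\<Sum>s\<in>UNIV. rhob s * f s * Kern m M pie PT s t))"
  unfolding moment_conditions_def Eb_state Eb_successor_indicator Eb_beta_successor_indicator
  by (auto simp: eq_divide_eq mult.commute)

lemma moment_conditions_imp_invariant:
  assumes "moment_conditions m M rhob pib pie PT f"
  shows "rhob t * f t = (\<Sum>s\<in>UNIV. rhob s * f s * Kern m M pie PT s t)"
proof (cases "rhob t = 0")
  case True
  have "rhob s * f s * Kern m M pie PT s t = 0" for s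
  proof (cases "rhob s = 0")
    case False
    then have "Kern m M pib PT s t = 0"
      using stationary_dist_transition_into_null[OF stationary_b Kern_nonneg[OF prob policy_b transition] True]
      by (metis mult_eq_0_iff)
    then show ?thesis
      by (simp add: Kern_absolutely_continuous)
  qed simp
  then have "(\<Sum>s\<in>UNIV. rhob s * f s * Kern m M pie PT s t) = 0"
    by (simp add: sum.neutral)
  then show ?thesis
    using True by simp
next
  case False
  then have "0 < rhob t"
    using stationary_distD(1)[OF stationary_b, of t] by simp
  then show ?thesis
    using assms unfolding moment_conditions_iff by blast
qed

end

theorem theorem4:
  fixes m :: nat and M :: "'u measure"
    and PT :: "'s::finite \<Rightarrow> nat \<Rightarrow> 'u \<Rightarrow> 's \<Rightarrow> real"
    and pib pie :: "'s \<Rightarrow> 'u \<Rightarrow> nat \<Rightarrow> real"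
    and rhob rhoe d :: "'s \<Rightarrow> real"
  assumes "prob_space M"
    and "is_policy m M pib" and "is_policy m M pie"
    and "is_transition m M PT"
    and overlap: "\<forall>s. \<forall>u\<in>space M. \<forall>a<m. 0 < pie s u a \<longrightarrow> 0 < pib s u a"
    and "ergodic_chain (Kern m M pib PT)" and "ergodic_chain (Kern m M pie PT)"
    and "stationary_dist (Kern m M pib PT) rhob"
    and "stationary_dist (Kern m M pie PT) rhoe"
    and dratio: "\<forall>g. (\<Sum>s\<in>UNIV. rhoe s * g s) = (\<Sum>s\<in>UNIV. rhob s * d s * g s)"
  shows "moment_conditions m M rhob pib pie PT d \<and>
         (\<forall>f. moment_conditions m M rhob pib pie PT f \<longrightarrow> (\<forall>s. 0 < rhob s \<longrightarrow> f s = d s))"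
proof -
  interpret mdpuc_overlap m M PT pib pie rhob
    using assms(1-5,8) by (rule mdpuc_overlap.intro)
  have rhoe_eq: "rhoe s = rhob s * d s" for s
    using dratio[rule_format, of "\<lambda>s'. if s' = s then 1 else 0"] by (simp add: if_distrib cong: if_cong)
  have "moment_conditions m M rhob pib pie PT d"
    unfolding moment_conditions_iff
    by (simp add: rhoe_eq[symmetric] stationary_distD[OF assms(9)])
  moreover have "f s = d s" if "moment_conditions m M rhob pib pie PT f" "0 < rhob s" for f s
  proof -
    have "(\<Sum>s\<in>UNIV. rhob s * f s) = 1"
      using that(1) unfolding moment_conditions_iff by blast
    moreover have "\<forall>t. rhob t * f t = (\<Sum>s\<in>UNIV. rhob s * f s * Kern m M pie PT s t)"
      using moment_conditions_imp_invariant[OF that(1)] by blast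
    ultimately have "(\<lambda>s. rhob s * f s) = rhoe"
      by (rule ergodic_chain_invariant_unique[OF assms(7,9)])
    then show ?thesis
      using that(2) rhoe_eq[of s] by (metis mult_left_cancel less_irrefl)
  qed
  ultimately show ?thesis
    by blast
qed

end
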